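(* Let $M$ be a finite abelian group and $J$ a Jacobi function on $M$. For $\alpha\in M$ define $Q_\alpha\colon M\to\mathbf{C}$ by $Q_\alpha(\beta)=J(\alpha\beta^{-1},\beta)$. Then $Q_\alpha\ast Q_\beta=Q_{\alpha\beta}$ for all $\alpha,\beta\in M$.
   Context: The convolution of $f,g\colon M\to\mathbf{C}$ is $(f\ast g)(\alpha)=\sum_{\alpha=\beta\gamma}f(\beta)g(\gamma)$. $\delta(\alpha)=1$ if $\alpha=1$ and $0$ otherwise. A Jacobi function on $M$ is a function $J\colon M\times M\to\mathbf{C}$ satisfying: (A) $J(\alpha,\beta)=J(\beta,\alpha)$; (B) with $J^*(\alpha,\beta)=-\delta(\alpha)-\delta(\beta)+J(\alpha,\beta)$, $J^*(\alpha,\beta)J^*(\alpha\beta,\gamma)=J^*(\alpha,\beta\gamma)J^*(\beta,\gamma)$; (C) $\sum_{\beta\in M}J(\alpha_1\beta,\alpha_2\beta^{-1})J(\alpha_3\beta,\alpha_4\beta^{-1})=J(\alpha_1\alpha_4,\alpha_2\alpha_3)$; all for all elements of $M$. *)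

theory Defs
  imports "HOL-Analysis.Analysis"
begin

text \<open>The finite abelian group M is modelled as a type of class finite and ab_group_add,
written additively: the paper's product is +, identity is 0, inverse is unary minus.\<close>

definition conv :: "('a::{finite,ab_group_add} \<Rightarrow> complex) \<Rightarrow> ('a \<Rightarrow> complex) \<Rightarrow> 'a \<Rightarrow> complex" where
  "conv f g a = (\<Sum>(b, c)\<in>{(b, c). a = b + c}. f b * g c)"

definition delta :: "'a::{finite,ab_group_add} \<Rightarrow> complex" where
  "delta a = (if a = 0 then 1 else 0)"

definition Jstar :: "('a::{finite,ab_group_add} \<Rightarrow> 'a \<Rightarrow> complex) \<Rightarrow> 'a \<Rightarrow> 'a \<Rightarrow> complex" where
  "Jstar J a b = - delta a - delta b + J a b"

definition jacobi_function :: "('a::{finite,ab_group_add} \<Rightarrow> 'a \<Rightarrow> complex) \<Rightarrow> bool" where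
  "jacobi_function J \<longleftrightarrow>
     (\<forall>a b. J a b = J b a) \<and>
     (\<forall>a b c. Jstar J a b * Jstar J (a + b) c = Jstar J a (b + c) * Jstar J b c) \<and>
     (\<forall>a1 a2 a3 a4. (\<Sum>b\<in>UNIV. J (a1 + b) (a2 - b) * J (a3 + b) (a4 - b)) = J (a1 + a4) (a2 + a3))"

definition Qfun :: "('a::{finite,ab_group_add} \<Rightarrow> 'a \<Rightarrow> complex) \<Rightarrow> 'a \<Rightarrow> 'a \<Rightarrow> complex" where
  "Qfun J a b = J (a - b) b"

end

theory Submission
  imports Defs
begin

text \<open>By symmetry (A), \<open>Q\<^sub>\<alpha>(\<beta>) = J(\<beta>, \<alpha>\<beta>\<^sup>-\<^sup>1)\<close>, so the convolution
  \<open>(Q\<^sub>\<alpha> * Q\<^sub>\<beta>)(\<gamma>)\<close> is the left-hand side of the summation identity (C) with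
  \<open>\<alpha>\<^sub>1 = 1, \<alpha>\<^sub>2 = \<alpha>, \<alpha>\<^sub>3 = \<beta>\<gamma>\<^sup>-\<^sup>1, \<alpha>\<^sub>4 = \<gamma>\<close>; its right-hand side is
  \<open>J(\<gamma>, \<alpha>\<beta>\<gamma>\<^sup>-\<^sup>1) = Q\<^sub>\<alpha>\<^sub>\<beta>(\<gamma>)\<close>.\<close>

lemma conv_eq_sum:
  fixes f g :: "'a::{finite,ab_group_add} \<Rightarrow> complex"
  shows "conv f g a = (\<Sum>x\<in>UNIV. f x * g (a - x))"
proof -
  have pairs: "{(b, c). a = b + c} = (\<lambda>x. (x, a - x)) ` UNIV"
    by (auto simp: image_def algebra_simps)
  have "inj (\<lambda>x::'a. (x, a - x))"
    by (auto simp: inj_def)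
  then show ?thesis
    unfolding conv_def pairs by (simp add: sum.reindex)
qed

lemma jacobi_function_commute:
  assumes "jacobi_function J"
  shows "J a b = J b a"
  using assms unfolding jacobi_function_def by blast

lemma jacobi_function_sum:
  assumes "jacobi_function J"
  shows "(\<Sum>b\<in>UNIV. J (a1 + b) (a2 - b) * J (a3 + b) (a4 - b)) = J (a1 + a4) (a2 + a3)"
  using assms unfolding jacobi_function_def by blast

lemma Qfun_swap:
  assumes "jacobi_function J"
  shows "Qfun J a b = J b (a - b)"
  unfolding Qfun_def using jacobi_function_commute[OF assms] .

theorem mainTheorem6:
  fixes J :: "'a::{finite,ab_group_add} \<Rightarrow> 'a \<Rightarrow> complex"
  assumes "jacobi_function J"
  shows "\<forall>a b. conv (Qfun J a) (Qfun J b) = Qfun J (a + b)"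
proof (intro allI ext)
  fix a b g :: 'a
  have "conv (Qfun J a) (Qfun J b) g
      = (\<Sum>x\<in>UNIV. J (0 + x) (a - x) * J ((b - g) + x) (g - x))"
    unfolding conv_eq_sum Qfun_swap[OF assms, of a]
    by (simp add: Qfun_def algebra_simps)
  also have "\<dots> = J (0 + g) (a + (b - g))"
    using jacobi_function_sum[OF assms] .
  also have "\<dots> = Qfun J (a + b) g"
    by (simp add: Qfun_swap[OF assms] algebra_simps)
  finally show "conv (Qfun J a) (Qfun J b) g = Qfun J (a + b) g" .
qed

end
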